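(* With the mesh and coefficients $a^{(n)}_{n-k}$ as in the context (in particular $\tau_{n-1}\le\tau_n$), define for $1\le j\le k\le N$: $\zeta^{(k)}_0=a^{(k)}_0$ and $\zeta^{(k)}_{k-j}=a^{(k)}_{k-j}-a^{(k)}_{k-j-1}$ for $j<k$. Then for every $1\le n\le N$ and every real sequence $w_1,\dots,w_n$, $$\sum_{k=1}^n w_k\sum_{j=1}^k\zeta^{(k)}_{k-j}w_j\;\ge\;\frac12\sum_{k=1}^{n-1}\big(a^{(k)}_0-a^{(k+1)}_0\big)w_k^2\;\ge\;0 .$$
   Context: Fix $T>0$, $0<\alpha<1$ and a mesh $0=t_0<t_1<\dots<t_N=T$ with step sizes $\tau_n=t_n-t_{n-1}$ satisfying $\tau_{n-1}\le\tau_n$ for $2\le n\le N$. Set $t_{-1/2}=t_0$, $t_{n-1/2}=t_{n-1}+\tau_n/2$ for $1\le n\le N$, $\tau_{1/2}=\tau_1/2$ and $\tau_{n-1/2}=(\tau_n+\tau_{n-1})/2$ for $n\ge 2$. Let $\omega_\gamma(t)=t^{\gamma-1}/\Gamma(\gamma)$ for $t>0$. For $1\le n\le N$ and $1\le k\le n$ define $$a^{(n)}_{n-k}=\frac{1}{\tau_{k-1/2}}\int_{t_{k-3/2}}^{t_{k-1/2}}\omega_{1-\alpha}(t_{n-1/2}-s)\,ds .$$ *)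

theory Defs
  imports "HOL-Analysis.Analysis"
begin

definition omega :: "real \<Rightarrow> real \<Rightarrow> real" where
  "omega \<gamma> t = t powr (\<gamma> - 1) / Gamma \<gamma>"

definition tau :: "(nat \<Rightarrow> real) \<Rightarrow> nat \<Rightarrow> real" where
  "tau t n = t n - t (n - 1)"

text \<open>tmid t m represents t_(m-1/2): t_(-1/2) = t_0, t_(m-1/2) = t_(m-1) + tau_m/2 for m >= 1.\<close>
definition tmid :: "(nat \<Rightarrow> real) \<Rightarrow> nat \<Rightarrow> real" where
  "tmid t m = (if m = 0 then t 0 else t (m - 1) + tau t m / 2)"

text \<open>tauh t k represents tau_(k-1/2): tau_(1/2) = tau_1/2, tau_(k-1/2) = (tau_k + tau_(k-1))/2 for k >= 2.\<close>
definition tauh :: "(nat \<Rightarrow> real) \<Rightarrow> nat \<Rightarrow> real" where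
  "tauh t k = (if k = 1 then tau t 1 / 2 else (tau t k + tau t (k - 1)) / 2)"

text \<open>acoef \<alpha> t n k represents a^(n)_(n-k), for 1 <= k <= n.\<close>
definition acoef :: "real \<Rightarrow> (nat \<Rightarrow> real) \<Rightarrow> nat \<Rightarrow> nat \<Rightarrow> real" where
  "acoef \<alpha> t n k = (1 / tauh t k) *
     integral {tmid t (k - 1)..tmid t k} (\<lambda>s. omega (1 - \<alpha>) (tmid t n - s))"

text \<open>zeta \<alpha> t k j represents zeta^(k)_(k-j), for 1 <= j <= k:
  zeta^(k)_0 = a^(k)_0 and zeta^(k)_(k-j) = a^(k)_(k-j) - a^(k)_(k-j-1) for j < k.\<close>
definition zeta :: "real \<Rightarrow> (nat \<Rightarrow> real) \<Rightarrow> nat \<Rightarrow> nat \<Rightarrow> real" where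
  "zeta \<alpha> t k j = (if j = k then acoef \<alpha> t k k else acoef \<alpha> t k j - acoef \<alpha> t k (j + 1))"

end

theory Submission
  imports Defs
begin

text \<open>By the fundamental theorem of calculus, \<open>\<Gamma>(2 - \<alpha>) a^(n)_(n-k)\<close> is the slope of the secant
  of the concave function \<open>s powr (1 - \<alpha>)\<close> over the interval
  \<open>[t_(n-1/2) - t_(k-1/2), t_(n-1/2) - t_(k-3/2)]\<close>, and such slopes decrease as the interval moves
  to the right. Hence the coefficients are nonnegative, increase towards the diagonal, and, because the
  step sizes are nondecreasing, satisfy \<open>a^(k+1)_(k-j) \<le> a^(k)_(k-j)\<close>. These three properties
  alone give the bound: the off-diagonal entries \<open>\<zeta>^(k)_(k-j)\<close> are nonpositive, so
  \<open>2 w_k w_j \<le> w_k^2 + w_j^2\<close> and telescoping bound row \<open>k\<close> from below, and an induction on \<open>n\<close>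
  that carries the additional nonnegative term \<open>\<Sum>_j a^(n)_(n-j) w_j^2 / 2\<close> absorbs the negative
  terms.\<close>

definition secant :: "(real \<Rightarrow> real) \<Rightarrow> real \<Rightarrow> real \<Rightarrow> real" where
  "secant f a b = (f b - f a) / (b - a)"

lemma secant_powr_mvt:
  fixes \<beta> x y :: real
  assumes "0 \<le> x" "x < y" "0 < \<beta>"
  obtains z where "x < z" "z < y" "secant (\<lambda>s. s powr \<beta>) x y = \<beta> * z powr (\<beta> - 1)"
proof -
  have "continuous_on {x..y} (\<lambda>s. s powr \<beta>)"
    by (rule continuous_on_powr') (use assms in \<open>auto intro!: continuous_intros\<close>)
  moreover have "(\<lambda>s. s powr \<beta>) differentiable (at z)" if "x < z" for z
    using has_real_derivative_powr[of z \<beta>] that assms real_differentiable_def by force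
  ultimately obtain l z where z: "x < z" "z < y" "DERIV (\<lambda>s. s powr \<beta>) z :> l"
      "y powr \<beta> - x powr \<beta> = (y - x) * l"
    using MVT[OF assms(2)] by blast
  have "l = \<beta> * z powr (\<beta> - 1)"
    using DERIV_unique[OF z(3) has_real_derivative_powr] z assms by auto
  with z assms show ?thesis
    by (intro that[of z]) (auto simp: secant_def)
qed

lemma secant_powr_adjacent_le:
  fixes \<beta> x y z :: real
  assumes "0 \<le> x" "x < y" "y < z" "0 < \<beta>" "\<beta> \<le> 1"
  shows "secant (\<lambda>s. s powr \<beta>) y z \<le> secant (\<lambda>s. s powr \<beta>) x y"
proof -
  obtain u where u: "x < u" "u < y" "secant (\<lambda>s. s powr \<beta>) x y = \<beta> * u powr (\<beta> - 1)"
    using secant_powr_mvt[of x y \<beta>] assms by blast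
  obtain v where v: "y < v" "v < z" "secant (\<lambda>s. s powr \<beta>) y z = \<beta> * v powr (\<beta> - 1)"
    using secant_powr_mvt[of y z \<beta>] assms by auto
  have "v powr (\<beta> - 1) \<le> u powr (\<beta> - 1)"
    by (rule powr_mono2') (use assms u v in auto)
  with u v assms show ?thesis by simp
qed

lemma secant_split:
  assumes "x < y" "y < z"
  shows "secant f x z * (z - x) = secant f x y * (y - x) + secant f y z * (z - y)"
  using assms by (simp add: secant_def)

lemma secant_powr_antimono:
  fixes \<beta> a b a' b' :: real
  assumes "0 \<le> a'" "a' \<le> a" "b' \<le> b" "a' < b'" "a < b" "0 < \<beta>" "\<beta> \<le> 1"
  shows "secant (\<lambda>s. s powr \<beta>) a b \<le> secant (\<lambda>s. s powr \<beta>) a' b'"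
proof -
  let ?S = "secant (\<lambda>s. s powr \<beta>)"
  have "?S a b \<le> ?S a' b"
  proof (cases "a' = a")
    case False
    have "?S a b * (a - a') \<le> ?S a' a * (a - a')"
      using secant_powr_adjacent_le[of a' a b \<beta>] False assms by (intro mult_right_mono) auto
    then have "?S a b * (b - a') \<le> ?S a' b * (b - a')"
      using secant_split[of a' a b "\<lambda>s. s powr \<beta>"] False assms by (simp add: algebra_simps)
    then show ?thesis using assms by simp
  qed simp
  also have "\<dots> \<le> ?S a' b'"
  proof (cases "b' = b")
    case False
    have "?S b' b * (b - b') \<le> ?S a' b' * (b - b')"
      using secant_powr_adjacent_le[of a' b' b \<beta>] False assms by (intro mult_right_mono) auto
    then have "?S a' b * (b - a') \<le> ?S a' b' * (b - a')"
      using secant_split[of a' b' b "\<lambda>s. s powr \<beta>"] False assms by (simp add: algebra_simps)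
    then show ?thesis using assms by simp
  qed simp
  finally show ?thesis .
qed

lemma secant_powr_nonneg:
  fixes \<beta> a b :: real
  assumes "0 \<le> a" "a < b" "0 < \<beta>"
  shows "secant (\<lambda>s. s powr \<beta>) a b \<ge> 0"
  unfolding secant_def using assms by (auto intro!: divide_nonneg_pos powr_mono2)

lemma integral_omega_reflected:
  fixes \<gamma> A B c :: real
  assumes "A \<le> B" "B \<le> c" "0 < \<gamma>"
  shows "integral {A..B} (\<lambda>s. omega \<gamma> (c - s)) = ((c - A) powr \<gamma> - (c - B) powr \<gamma>) / Gamma (\<gamma> + 1)"
proof -
  have Gamma: "Gamma (\<gamma> + 1) = \<gamma> * Gamma \<gamma>" "Gamma (\<gamma> + 1) > 0"
    using assms by (auto intro!: Gamma_plus1 simp: nonpos_Ints_def)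
  define F where "F = (\<lambda>s. - ((c - s) powr \<gamma>) / Gamma (\<gamma> + 1))"
  have "continuous_on {A..B} (\<lambda>s. (c - s) powr \<gamma>)"
    by (rule continuous_on_powr') (use assms in \<open>auto intro!: continuous_intros\<close>)
  then have cont: "continuous_on {A..B} F"
    unfolding F_def using Gamma(2) by (auto intro!: continuous_intros)
  have deriv: "(F has_vector_derivative omega \<gamma> (c - x)) (at x)" if "x \<in> {A<..<B}" for x
  proof -
    have pos: "c - x > 0" using that assms by auto
    have "((\<lambda>s. (c - s) powr \<gamma>) has_real_derivative - (\<gamma> * (c - x) powr (\<gamma> - 1))) (at x)"
      using pos by (auto intro!: derivative_eq_intros)
    then have "(F has_real_derivative (\<gamma> * (c - x) powr (\<gamma> - 1)) / Gamma (\<gamma> + 1)) (at x)"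
      unfolding F_def using DERIV_cdivide[OF DERIV_minus] by fastforce
    moreover have "\<gamma> * (c - x) powr (\<gamma> - 1) / Gamma (\<gamma> + 1) = omega \<gamma> (c - x)"
      unfolding omega_def Gamma(1) using assms by simp
    ultimately show ?thesis
      by (simp add: has_real_derivative_iff_has_vector_derivative)
  qed
  have "((\<lambda>s. omega \<gamma> (c - s)) has_integral (F B - F A)) {A..B}"
    by (rule fundamental_theorem_of_calculus_interior[OF assms(1) cont deriv])
  then show ?thesis
    unfolding F_def by (simp add: integral_unique diff_divide_distrib)
qed

definition kernel_diff :: "(nat \<Rightarrow> nat \<Rightarrow> real) \<Rightarrow> nat \<Rightarrow> nat \<Rightarrow> real" where
  "kernel_diff b k j = (if j = k then b k k else b k j - b k (j + 1))"

lemma kernel_diff_row_lower_bound: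
  fixes b :: "nat \<Rightarrow> nat \<Rightarrow> real" and w :: "nat \<Rightarrow> real"
  assumes "1 \<le> k" and mono: "\<And>j. 1 \<le> j \<Longrightarrow> j < k \<Longrightarrow> b k j \<le> b k (j + 1)"
  shows "w k * (\<Sum>j=1..k. kernel_diff b k j * w j)
     \<ge> (b k k + b k 1) / 2 * (w k)\<^sup>2 - (\<Sum>j=1..k-1. (b k (j + 1) - b k j) * (w j)\<^sup>2) / 2"
proof -
  define d where "d j = b k (j + 1) - b k j" for j
  have "(\<Sum>j=1..k-1. kernel_diff b k j * w j) = - (\<Sum>j=1..k-1. d j * w j)"
    by (auto simp: kernel_diff_def d_def sum_negf[symmetric] algebra_simps intro!: sum.cong)
  moreover have "{1..k} = insert k {1..k-1}" using assms(1) by auto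
  ultimately have "(\<Sum>j=1..k. kernel_diff b k j * w j) = b k k * w k - (\<Sum>j=1..k-1. d j * w j)"
    using assms(1) by (simp add: kernel_diff_def)
  then have row: "w k * (\<Sum>j=1..k. kernel_diff b k j * w j)
      = b k k * (w k)\<^sup>2 - (\<Sum>j=1..k-1. d j * w k * w j)"
    by (simp add: right_diff_distrib sum_distrib_left power2_eq_square mult_ac)
  have "(\<Sum>j=1..k-1. d j * w k * w j) \<le> (\<Sum>j=1..k-1. d j * (w k)\<^sup>2 / 2 + d j * (w j)\<^sup>2 / 2)"
  proof (rule sum_mono)
    fix j assume "j \<in> {1..k-1}"
    then have "0 \<le> d j" using mono[of j] by (auto simp: d_def)
    then have "0 \<le> d j * (w k - w j)\<^sup>2" by simp
    then show "d j * w k * w j \<le> d j * (w k)\<^sup>2 / 2 + d j * (w j)\<^sup>2 / 2"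
      by (simp add: power2_eq_square algebra_simps)
  qed
  also have "(\<Sum>j=1..k-1. d j * (w k)\<^sup>2 / 2 + d j * (w j)\<^sup>2 / 2)
      = (b k k - b k 1) * (w k)\<^sup>2 / 2 + (\<Sum>j=1..k-1. d j * (w j)\<^sup>2) / 2"
  proof -
    have "(\<Sum>j=1..k-1. d j) = b k k - b k 1"
      using sum_Suc_diff[of 1 "k - 1" "b k"] assms(1) by (simp add: d_def)
    then show ?thesis
      by (simp add: sum.distrib sum_divide_distrib[symmetric] sum_distrib_right[symmetric])
  qed
  finally show ?thesis
    unfolding row d_def by (simp add: field_simps)
qed

lemma kernel_diff_quadratic_form_lower_bound:
  fixes b :: "nat \<Rightarrow> nat \<Rightarrow> real" and w :: "nat \<Rightarrow> real"
  assumes nonneg: "\<And>k j. 1 \<le> j \<Longrightarrow> j \<le> k \<Longrightarrow> k \<le> N \<Longrightarrow> 0 \<le> b k j"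
    and mono: "\<And>k j. 1 \<le> j \<Longrightarrow> j < k \<Longrightarrow> k \<le> N \<Longrightarrow> b k j \<le> b k (j + 1)"
    and shift: "\<And>k j. 1 \<le> j \<Longrightarrow> j \<le> k \<Longrightarrow> k + 1 \<le> N \<Longrightarrow> b (k + 1) (j + 1) \<le> b k j"
    and "1 \<le> n" "n \<le> N"
  shows "(\<Sum>k=1..n. w k * (\<Sum>j=1..k. kernel_diff b k j * w j))
     \<ge> (\<Sum>k=1..n-1. (b k k - b (k + 1) (k + 1)) * (w k)\<^sup>2) / 2 + (\<Sum>j=1..n. b n j * (w j)\<^sup>2) / 2"
  using \<open>1 \<le> n\<close> \<open>n \<le> N\<close>
proof (induction n rule: dec_induct)
  case base
  have "0 \<le> b 1 1 * (w 1)\<^sup>2" using nonneg[of 1 1] base by simp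
  then show ?case by (simp add: kernel_diff_def power2_eq_square mult_ac)
next
  case (step n)
  define m where "m = n + 1"
  have IH: "(\<Sum>k=1..n. w k * (\<Sum>j=1..k. kernel_diff b k j * w j))
     \<ge> (\<Sum>k=1..n-1. (b k k - b (k + 1) (k + 1)) * (w k)\<^sup>2) / 2 + (\<Sum>j=1..n. b n j * (w j)\<^sup>2) / 2"
    using step by simp
  have row: "w m * (\<Sum>j=1..m. kernel_diff b m j * w j)
     \<ge> (b m m * (w m)\<^sup>2 + b m 1 * (w m)\<^sup>2) / 2 - (\<Sum>j=1..n. (b m (j + 1) - b m j) * (w j)\<^sup>2) / 2"
    using kernel_diff_row_lower_bound[of m b w] mono[of _ m] step by (simp add: m_def ring_distribs)
  have diag: "(\<Sum>k=1..m-1. (b k k - b (k + 1) (k + 1)) * (w k)\<^sup>2)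
      = (\<Sum>k=1..n-1. (b k k - b (k + 1) (k + 1)) * (w k)\<^sup>2) + (b n n - b m m) * (w n)\<^sup>2"
    using \<open>1 \<le> n\<close> by (cases n) (auto simp: m_def)
  txt \<open>Of the defect left by the shift from row \<open>n\<close> to row \<open>n + 1\<close>, only the \<open>j = n\<close> term
    is needed to pay for the new diagonal term.\<close>
  have defect: "(b n n - b m m) * (w n)\<^sup>2 \<le> (\<Sum>j=1..n. (b n j - b m (j + 1)) * (w j)\<^sup>2)"
  proof -
    have "0 \<le> (\<Sum>j=1..n-1. (b n j - b m (j + 1)) * (w j)\<^sup>2)"
      using shift step by (intro sum_nonneg) (auto simp: m_def)
    moreover have "{1..n} = insert n {1..n-1}" using \<open>1 \<le> n\<close> by auto
    ultimately show ?thesis using \<open>1 \<le> n\<close> by (simp add: m_def)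
  qed
  have "0 \<le> b m 1 * (w m)\<^sup>2" using nonneg[of 1 m] step by (simp add: m_def)
  moreover have "(\<Sum>j=1..n. b n j * (w j)\<^sup>2) - (\<Sum>j=1..n. (b m (j + 1) - b m j) * (w j)\<^sup>2)
      - (\<Sum>j=1..n. b m j * (w j)\<^sup>2) = (\<Sum>j=1..n. (b n j - b m (j + 1)) * (w j)\<^sup>2)"
    by (simp add: sum_subtractf[symmetric] algebra_simps)
  moreover have "(\<Sum>k=1..m. w k * (\<Sum>j=1..k. kernel_diff b k j * w j))
      = (\<Sum>k=1..n. w k * (\<Sum>j=1..k. kernel_diff b k j * w j)) + w m * (\<Sum>j=1..m. kernel_diff b m j * w j)"
    "(\<Sum>j=1..m. b m j * (w j)\<^sup>2) = (\<Sum>j=1..n. b m j * (w j)\<^sup>2) + b m m * (w m)\<^sup>2"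
    by (simp_all add: m_def)
  ultimately have "(\<Sum>k=1..m. w k * (\<Sum>j=1..k. kernel_diff b k j * w j))
     \<ge> (\<Sum>k=1..m-1. (b k k - b (k + 1) (k + 1)) * (w k)\<^sup>2) / 2 + (\<Sum>j=1..m. b m j * (w j)\<^sup>2) / 2"
    using IH row diag defect by argo
  then show ?case by (simp add: m_def)
qed

lemma tmid_diff: "1 \<le> m \<Longrightarrow> tmid t m - tmid t (m - 1) = tauh t m"
  unfolding tmid_def tauh_def tau_def by (cases "m = 1") (auto simp: field_simps)

locale mesh =
  fixes t :: "nat \<Rightarrow> real" and N :: nat
  assumes increasing: "\<And>m. 1 \<le> m \<Longrightarrow> m \<le> N \<Longrightarrow> t (m - 1) < t m"
    and tau_mono: "\<And>m. 2 \<le> m \<Longrightarrow> m \<le> N \<Longrightarrow> tau t (m - 1) \<le> tau t m"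
begin

lemma tau_pos: "1 \<le> m \<Longrightarrow> m \<le> N \<Longrightarrow> 0 < tau t m"
  using increasing unfolding tau_def by force

lemma tauh_pos: "1 \<le> m \<Longrightarrow> m \<le> N \<Longrightarrow> 0 < tauh t m"
  using tau_pos[of m] tau_pos[of "m - 1"] unfolding tauh_def by (cases "m = 1") force+

lemma tauh_le_Suc: "1 \<le> m \<Longrightarrow> m + 1 \<le> N \<Longrightarrow> tauh t m \<le> tauh t (m + 1)"
  unfolding tauh_def using tau_pos[of "Suc (Suc 0)"] tau_mono[of "m + 1"] tau_mono[of m] by auto

lemma tauh_mono:
  assumes "1 \<le> i" "i \<le> j" "j \<le> N"
  shows "tauh t i \<le> tauh t j"
  using assms(2,3)
proof (induction j rule: dec_induct)
  case (step j)
  then show ?case using tauh_le_Suc[of j] assms(1) by simp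
qed simp

lemma tmid_mono:
  assumes "i \<le> j" "j \<le> N"
  shows "tmid t i \<le> tmid t j"
  using assms
proof (induction j rule: dec_induct)
  case (step j)
  then show ?case using tmid_diff[of "Suc j" t] tauh_pos[of "Suc j"] by simp
qed simp

lemma acoef_eq_secant:
  assumes "\<alpha> < 1" "1 \<le> k" "k \<le> n" "n \<le> N"
  shows "acoef \<alpha> t n k
    = secant (\<lambda>s. s powr (1 - \<alpha>)) (tmid t n - tmid t k) (tmid t n - tmid t (k - 1)) / Gamma (1 - \<alpha> + 1)"
proof -
  have "tmid t k \<le> tmid t n" "tmid t (k - 1) \<le> tmid t k"
    using tmid_mono assms by auto
  then show ?thesis
    using integral_omega_reflected[of "tmid t (k - 1)" "tmid t k" "tmid t n" "1 - \<alpha>"] tmid_diff[of k t] assms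
    unfolding acoef_def secant_def by simp
qed

lemma acoef_nonneg:
  assumes "\<alpha> < 1" "1 \<le> j" "j \<le> k" "k \<le> N"
  shows "0 \<le> acoef \<alpha> t k j"
proof -
  have "0 \<le> secant (\<lambda>s. s powr (1 - \<alpha>)) (tmid t k - tmid t j) (tmid t k - tmid t (j - 1))"
    using tmid_mono[of j k] tmid_diff[of j t] tauh_pos[of j] assms by (intro secant_powr_nonneg) auto
  then show ?thesis
    using acoef_eq_secant[of \<alpha> j k] assms by simp
qed

lemma acoef_mono:
  assumes "0 < \<alpha>" "\<alpha> < 1" "1 \<le> j" "j < k" "k \<le> N"
  shows "acoef \<alpha> t k j \<le> acoef \<alpha> t k (j + 1)"
proof -
  have "secant (\<lambda>s. s powr (1 - \<alpha>)) (tmid t k - tmid t j) (tmid t k - tmid t (j - 1))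
     \<le> secant (\<lambda>s. s powr (1 - \<alpha>)) (tmid t k - tmid t (j + 1)) (tmid t k - tmid t j)"
    using tmid_mono[of "j + 1" k] tmid_diff[of "j + 1" t] tmid_diff[of j t] tauh_pos[of j] tauh_pos[of "j + 1"] assms
    by (intro secant_powr_antimono) auto
  then show ?thesis
    using acoef_eq_secant[of \<alpha> j k] acoef_eq_secant[of \<alpha> "j + 1" k] assms by (simp add: divide_right_mono)
qed

text \<open>Here the nondecreasing step sizes enter: the secant interval of \<open>a^(k+1)_(k-j)\<close> lies no closer
  to the singularity than that of \<open>a^(k)_(k-j)\<close>.\<close>
lemma acoef_shift_le:
  assumes "0 < \<alpha>" "\<alpha> < 1" "1 \<le> j" "j \<le> k" "k + 1 \<le> N"
  shows "acoef \<alpha> t (k + 1) (j + 1) \<le> acoef \<alpha> t k j"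
proof -
  have "tauh t (j + 1) \<le> tauh t (k + 1)" "tauh t j \<le> tauh t (k + 1)"
    using tauh_mono[of "j + 1" "k + 1"] tauh_mono[of j "k + 1"] assms by auto
  then have "secant (\<lambda>s. s powr (1 - \<alpha>)) (tmid t (k + 1) - tmid t (j + 1)) (tmid t (k + 1) - tmid t j)
     \<le> secant (\<lambda>s. s powr (1 - \<alpha>)) (tmid t k - tmid t j) (tmid t k - tmid t (j - 1))"
    using tmid_mono[of j k] tmid_diff[of "j + 1" t] tmid_diff[of j t] tmid_diff[of "k + 1" t]
      tauh_pos[of j] tauh_pos[of "j + 1"] assms
    by (intro secant_powr_antimono) auto
  then show ?thesis
    using acoef_eq_secant[of \<alpha> j k] acoef_eq_secant[of \<alpha> "j + 1" "k + 1"] assms by (simp add: divide_right_mono)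
qed

end

theorem mainTheorem4:
  fixes T \<alpha> :: real and N n :: nat and t w :: "nat \<Rightarrow> real"
  assumes "T > 0" and "0 < \<alpha>" and "\<alpha> < 1"
    and "t 0 = 0" and "t N = T"
    and "\<And>m. 1 \<le> m \<Longrightarrow> m \<le> N \<Longrightarrow> t (m - 1) < t m"
    and "\<And>m. 2 \<le> m \<Longrightarrow> m \<le> N \<Longrightarrow> tau t (m - 1) \<le> tau t m"
    and "1 \<le> n" and "n \<le> N"
  shows "(\<Sum>k=1..n. w k * (\<Sum>j=1..k. zeta \<alpha> t k j * w j))
           \<ge> (1/2) * (\<Sum>k=1..n-1. (acoef \<alpha> t k k - acoef \<alpha> t (k+1) (k+1)) * (w k)\<^sup>2)
       \<and> (1/2) * (\<Sum>k=1..n-1. (acoef \<alpha> t k k - acoef \<alpha> t (k+1) (k+1)) * (w k)\<^sup>2) \<ge> 0"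
proof -
  interpret mesh t N
    using assms(6,7) by unfold_locales
  have "zeta \<alpha> t = kernel_diff (acoef \<alpha> t)"
    by (simp add: fun_eq_iff zeta_def kernel_diff_def)
  moreover have "(\<Sum>k=1..n. w k * (\<Sum>j=1..k. kernel_diff (acoef \<alpha> t) k j * w j))
     \<ge> (\<Sum>k=1..n-1. (acoef \<alpha> t k k - acoef \<alpha> t (k + 1) (k + 1)) * (w k)\<^sup>2) / 2
       + (\<Sum>j=1..n. acoef \<alpha> t n j * (w j)\<^sup>2) / 2"
    using acoef_nonneg acoef_mono acoef_shift_le assms
    by (intro kernel_diff_quadratic_form_lower_bound[where N = N]) auto
  moreover have "0 \<le> (\<Sum>j=1..n. acoef \<alpha> t n j * (w j)\<^sup>2)"
    using acoef_nonneg assms by (intro sum_nonneg) auto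
  moreover have "0 \<le> (\<Sum>k=1..n-1. (acoef \<alpha> t k k - acoef \<alpha> t (k + 1) (k + 1)) * (w k)\<^sup>2)"
    using acoef_shift_le assms by (intro sum_nonneg) auto
  ultimately show ?thesis
    by auto
qed

end
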